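(* Let $\{\phi_i=U_i\phi\}_{i=1}^n$ be a geometrically uniform frame for $\mathbb{C}^m$ with generating group $\mathcal{Q}=\{U_1,\dots,U_n\}$, let $Q=\mathbb{Z}_{n_1}\times\cdots\times\mathbb{Z}_{n_p}$ be an additive group with a group isomorphism $\mathcal{Q}\to Q$, $U_i\mapsto q$, and write $\phi(q)=U_i\phi$ for the corresponding frame vector (so $\phi(0)=\phi$). Let $S=\sum_i\phi_i\phi_i^*$. Define $s(q)=\langle\phi(0),\phi(q)\rangle$, its Fourier transform $\hat s(h)=\frac1{\sqrt n}\sum_{q\in Q}\langle h,q\rangle s(q)$, the vector Fourier transform $\hat\phi(h)=\frac1{\sqrt n}\sum_{q\in Q}\langle h,q\rangle\phi(q)$, $\sigma(h)=n^{1/4}\sqrt{\hat s(h)}$ (where $\hat s(h)\ge0$), $\mathcal{I}=\{h\in Q:\sigma(h)\ne0\}$, and $u(h)=\hat\phi(h)/\sigma(h)$ for $h\in\mathcal{I}$. Then: (1) the numbers $\sigma(h)$, $h\in Q$, are the singular values of the $m\times n$ matrix $\Phi$ with columns $\phi_i$ (the nonzero ones being indexed by $\mathcal{I}$); (2) the dual frame vectors $\bar\phi_i=S^{-1}\phi_i$ are geometrically uniform with generating group $\mathcal{Q}$: $\bar\phi_i=U_i\bar\phi$, where $\bar\phi=S^{-1}\phi=\frac1{\sqrt n}\sum_{h\in\mathcal{I}}\frac{1}{\sigma(h)}u(h)$; (3) the canonical tight frame vectors $\mu_i=S^{-1/2}\phi_i$ are geometrically uniform with generating group $\mathcal{Q}$: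 $\mu_i=U_i\mu$, where $\mu=S^{-1/2}\phi=\frac1{\sqrt n}\sum_{h\in\mathcal{I}}u(h)$; (4) the frame bounds of $\{\phi_i\}$ are $A=\sqrt n\min_{h\in\mathcal{I}}\hat s(h)$ and $B=\sqrt n\max_{h\in\mathcal{I}}\hat s(h)$.
   Context: Inner product $\langle x,y\rangle=x^*y$. A geometrically uniform (GU) frame is a set $\{\phi_i=U_i\phi\}_{i=1}^n$ spanning $\mathbb{C}^m$, where $\{U_1,\dots,U_n\}$ is an abelian group of $n$ distinct unitary $m\times m$ matrices. Frame operator $S=\sum_i\phi_i\phi_i^*$; frame bounds $A=\lambda_{\min}(S)$, $B=\lambda_{\max}(S)$; $S^{-1/2}$ is the positive definite square root of $S^{-1}$. For $h,q\in Q=\mathbb{Z}_{n_1}\times\cdots\times\mathbb{Z}_{n_p}$, $\langle h,q\rangle=\prod_{t=1}^p e^{-2\pi i h_tq_t/n_t}$ (here $\langle h,q\rangle$ denotes this Fourier kernel, not a vector inner product). *)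

theory Defs
  imports "Jordan_Normal_Form.Jordan_Normal_Form"
begin

definition ip :: "complex vec \<Rightarrow> complex vec \<Rightarrow> complex" where
  "ip x y = (\<Sum>k<dim_vec x. cnj (x $ k) * y $ k)"

definition adj :: "complex mat \<Rightarrow> complex mat" where
  "adj A = mat (dim_col A) (dim_row A) (\<lambda>(i,j). cnj (A $$ (j,i)))"

definition unitary_m :: "nat \<Rightarrow> complex mat \<Rightarrow> bool" where
  "unitary_m m U \<longleftrightarrow> U \<in> carrier_mat m m \<and> adj U * U = 1\<^sub>m m \<and> U * adj U = 1\<^sub>m m"

definition hermitian_m :: "nat \<Rightarrow> complex mat \<Rightarrow> bool" where
  "hermitian_m m R \<longleftrightarrow> R \<in> carrier_mat m m \<and> adj R = R"

definition posdef_m :: "nat \<Rightarrow> complex mat \<Rightarrow> bool" where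
  "posdef_m m R \<longleftrightarrow> hermitian_m m R \<and>
     (\<forall>x \<in> carrier_vec m. x \<noteq> 0\<^sub>v m \<longrightarrow> 0 < Re (ip x (R *\<^sub>v x)))"

text \<open>Singular values of a (k x n) matrix A, listed with multiplicity as the n nonnegative
  square roots of the eigenvalues (with algebraic multiplicity) of the n x n matrix A^* A.\<close>
definition is_singular_values :: "complex mat \<Rightarrow> real multiset \<Rightarrow> bool" where
  "is_singular_values A M \<longleftrightarrow> (\<forall>x \<in># M. 0 \<le> x) \<and>
     char_poly (adj A * A) = (\<Prod>x \<in># M. [:- complex_of_real (x^2), 1:])"

definition lam_min :: "complex mat \<Rightarrow> real" where
  "lam_min S = Min (Re ` {e. eigenvalue S e})"
definition lam_max :: "complex mat \<Rightarrow> real" where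
  "lam_max S = Max (Re ` {e. eigenvalue S e})"

definition Qset :: "nat list \<Rightarrow> (nat \<Rightarrow> nat) set" where
  "Qset ns = {q. (\<forall>t < length ns. q t < ns ! t) \<and> (\<forall>t \<ge> length ns. q t = 0)}"

definition qadd :: "nat list \<Rightarrow> (nat \<Rightarrow> nat) \<Rightarrow> (nat \<Rightarrow> nat) \<Rightarrow> (nat \<Rightarrow> nat)" where
  "qadd ns q q' = (\<lambda>t. if t < length ns then (q t + q' t) mod (ns ! t) else 0)"

definition qzero :: "nat \<Rightarrow> nat" where
  "qzero = (\<lambda>_. 0)"

definition chi :: "nat list \<Rightarrow> (nat \<Rightarrow> nat) \<Rightarrow> (nat \<Rightarrow> nat) \<Rightarrow> complex" where
  "chi ns h q = (\<Prod>t < length ns.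
      exp (- (2 * complex_of_real pi * \<i> * of_nat (h t * q t) / of_nat (ns ! t))))"

definition fvec :: "(nat \<Rightarrow> complex mat) \<Rightarrow> complex vec \<Rightarrow> nat \<Rightarrow> complex vec" where
  "fvec U \<phi> i = U i *\<^sub>v \<phi>"

definition Phi_mat :: "nat \<Rightarrow> nat \<Rightarrow> (nat \<Rightarrow> complex mat) \<Rightarrow> complex vec \<Rightarrow> complex mat" where
  "Phi_mat m n U \<phi> = mat m n (\<lambda>(r,i). fvec U \<phi> i $ r)"

definition frame_op :: "nat \<Rightarrow> nat \<Rightarrow> (nat \<Rightarrow> complex mat) \<Rightarrow> complex vec \<Rightarrow> complex mat" where
  "frame_op m n U \<phi> = mat m m (\<lambda>(r,c). \<Sum>i<n. fvec U \<phi> i $ r * cnj (fvec U \<phi> i $ c))"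

definition phiq :: "nat \<Rightarrow> (nat \<Rightarrow> complex mat) \<Rightarrow> (nat \<Rightarrow> (nat \<Rightarrow> nat)) \<Rightarrow> complex vec
     \<Rightarrow> (nat \<Rightarrow> nat) \<Rightarrow> complex vec" where
  "phiq n U \<psi> \<phi> q = fvec U \<phi> (the_inv_into {..<n} \<psi> q)"

definition sfun :: "nat \<Rightarrow> (nat \<Rightarrow> complex mat) \<Rightarrow> (nat \<Rightarrow> (nat \<Rightarrow> nat)) \<Rightarrow> complex vec
     \<Rightarrow> (nat \<Rightarrow> nat) \<Rightarrow> complex" where
  "sfun n U \<psi> \<phi> q = ip (phiq n U \<psi> \<phi> qzero) (phiq n U \<psi> \<phi> q)"

definition shat :: "nat list \<Rightarrow> nat \<Rightarrow> (nat \<Rightarrow> complex mat) \<Rightarrow> (nat \<Rightarrow> (nat \<Rightarrow> nat)) \<Rightarrow> complex vec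
     \<Rightarrow> (nat \<Rightarrow> nat) \<Rightarrow> complex" where
  "shat ns n U \<psi> \<phi> h =
     (1 / complex_of_real (sqrt (real n))) * (\<Sum>q \<in> Qset ns. chi ns h q * sfun n U \<psi> \<phi> q)"

definition phihat :: "nat list \<Rightarrow> nat \<Rightarrow> nat \<Rightarrow> (nat \<Rightarrow> complex mat) \<Rightarrow> (nat \<Rightarrow> (nat \<Rightarrow> nat))
     \<Rightarrow> complex vec \<Rightarrow> (nat \<Rightarrow> nat) \<Rightarrow> complex vec" where
  "phihat ns m n U \<psi> \<phi> h = vec m (\<lambda>r.
     (1 / complex_of_real (sqrt (real n))) * (\<Sum>q \<in> Qset ns. chi ns h q * phiq n U \<psi> \<phi> q $ r))"

text \<open>sigma(h) = n^(1/4) sqrt(shat h) (shat h is shown to be real and nonnegative).\<close>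
definition sigma :: "nat list \<Rightarrow> nat \<Rightarrow> (nat \<Rightarrow> complex mat) \<Rightarrow> (nat \<Rightarrow> (nat \<Rightarrow> nat)) \<Rightarrow> complex vec
     \<Rightarrow> (nat \<Rightarrow> nat) \<Rightarrow> real" where
  "sigma ns n U \<psi> \<phi> h = root 4 (real n) * sqrt (Re (shat ns n U \<psi> \<phi> h))"

definition Iset :: "nat list \<Rightarrow> nat \<Rightarrow> (nat \<Rightarrow> complex mat) \<Rightarrow> (nat \<Rightarrow> (nat \<Rightarrow> nat)) \<Rightarrow> complex vec
     \<Rightarrow> (nat \<Rightarrow> nat) set" where
  "Iset ns n U \<psi> \<phi> = {h \<in> Qset ns. sigma ns n U \<psi> \<phi> h \<noteq> 0}"

definition uvec :: "nat list \<Rightarrow> nat \<Rightarrow> nat \<Rightarrow> (nat \<Rightarrow> complex mat) \<Rightarrow> (nat \<Rightarrow> (nat \<Rightarrow> nat))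
     \<Rightarrow> complex vec \<Rightarrow> (nat \<Rightarrow> nat) \<Rightarrow> complex vec" where
  "uvec ns m n U \<psi> \<phi> h =
     (1 / complex_of_real (sigma ns n U \<psi> \<phi> h)) \<cdot>\<^sub>v phihat ns m n U \<psi> \<phi> h"

end

(* The characters chi h of Q diagonalise the representation q \<mapsto> U_q simultaneously: the Fourier
   coefficients phi_hat h are common eigenvectors, U_q phi_hat h = cnj (chi h q) phi_hat h, so they
   are pairwise orthogonal, and the Gram identity |phi_hat h|^2 = sqrt n * cnj (s_hat h) shows that
   s_hat h is real and nonnegative.  Fourier inversion writes every frame vector, hence (the frame
   being spanning) every vector, in terms of the normalised nonzero coefficients u h, h \<in> I, which
   therefore form an orthonormal basis in which S is diagonal with entries sigma h ^ 2 =
   sqrt n * s_hat h.  Every operator diagonal in this basis commutes with all U_q; this applies to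
   S^-1 and S^-1/2 and makes the dual and the canonical tight frame geometrically uniform, with
   generators read off from the expansion of phi in the u h.  The eigenvalues of S, and by the
   unitary Fourier matrix those of Phi^* Phi, are the sigma h ^ 2. *)

theory Submission
  imports Defs
begin

section \<open>Inner products and matrices over the complex numbers\<close>

lemma ip_sum_right:
  fixes c :: "'b \<Rightarrow> complex"
  assumes "x \<in> carrier_vec m"
  shows "ip x (vec m (\<lambda>r. \<Sum>a\<in>A. c a * w a $ r)) = (\<Sum>a\<in>A. c a * ip x (w a))"
proof -
  have "ip x (vec m (\<lambda>r. \<Sum>a\<in>A. c a * w a $ r)) = (\<Sum>k<m. \<Sum>a\<in>A. cnj (x $ k) * (c a * w a $ k))"
    using assms by (simp add: ip_def sum_distrib_left)
  also have "\<dots> = (\<Sum>a\<in>A. \<Sum>k<m. c a * (cnj (x $ k) * w a $ k))"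
    by (subst sum.swap) (simp add: algebra_simps)
  also have "\<dots> = (\<Sum>a\<in>A. c a * ip x (w a))"
    using assms by (simp add: ip_def sum_distrib_left)
  finally show ?thesis .
qed

lemma ip_smult_left: "ip (c \<cdot>\<^sub>v x) y = cnj c * ip x y"
  by (simp add: ip_def sum_distrib_left algebra_simps)

lemma ip_smult_right:
  assumes "x \<in> carrier_vec m" "y \<in> carrier_vec m"
  shows "ip x (c \<cdot>\<^sub>v y) = c * ip x y"
  using assms by (simp add: ip_def sum_distrib_left algebra_simps)

lemma ip_commute:
  assumes "x \<in> carrier_vec m" "y \<in> carrier_vec m"
  shows "ip y x = cnj (ip x y)"
  using assms by (simp add: ip_def mult.commute)

lemma ip_self: "ip x x = complex_of_real (\<Sum>k<dim_vec x. (cmod (x $ k))\<^sup>2)"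
  unfolding ip_def of_real_sum by (intro sum.cong refl) (metis complex_norm_square mult.commute)

lemma ip_self_nonneg: "0 \<le> Re (ip x x)"
  by (simp add: ip_self sum_nonneg)

lemma ip_self_eq_0:
  assumes "x \<in> carrier_vec m" "ip x x = 0"
  shows "x = 0\<^sub>v m"
proof -
  have "(\<Sum>k<dim_vec x. (cmod (x $ k))\<^sup>2) = 0"
    using assms(2) unfolding ip_self of_real_eq_0_iff .
  then have "\<forall>k\<in>{..<dim_vec x}. (cmod (x $ k))\<^sup>2 = 0"
    by (subst sum_nonneg_eq_0_iff[symmetric]) auto
  then show ?thesis
    using assms(1) by (intro eq_vecI) auto
qed

lemma mult_mat_vec_sum:
  fixes M :: "complex mat" and c :: "'b \<Rightarrow> complex"
  assumes M: "M \<in> carrier_mat k m" and w: "\<And>a. a \<in> A \<Longrightarrow> w a \<in> carrier_vec m"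
  shows "M *\<^sub>v vec m (\<lambda>r. \<Sum>a\<in>A. c a * w a $ r) = vec k (\<lambda>r. \<Sum>a\<in>A. c a * (M *\<^sub>v w a) $ r)"
proof (rule eq_vecI)
  fix i assume "i < dim_vec (vec k (\<lambda>r. \<Sum>a\<in>A. c a * (M *\<^sub>v w a) $ r))"
  then have i: "i < k" by simp
  have "(M *\<^sub>v vec m (\<lambda>r. \<Sum>a\<in>A. c a * w a $ r)) $ i = (\<Sum>j<m. M $$ (i, j) * (\<Sum>a\<in>A. c a * w a $ j))"
    using M i by (simp add: scalar_prod_def row_def lessThan_atLeast0)
  also have "\<dots> = (\<Sum>a\<in>A. c a * (\<Sum>j<m. M $$ (i, j) * w a $ j))"
    unfolding sum_distrib_left by (subst sum.swap) (simp add: mult.left_commute)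
  also have "\<dots> = vec k (\<lambda>r. \<Sum>a\<in>A. c a * (M *\<^sub>v w a) $ r) $ i"
    using M i by (auto simp: scalar_prod_def row_def lessThan_atLeast0 carrier_vecD[OF w] intro!: sum.cong)
  finally show "(M *\<^sub>v vec m (\<lambda>r. \<Sum>a\<in>A. c a * w a $ r)) $ i = \<dots>" .
qed (use M in simp)

lemma smult_vec_cancel_left:
  fixes c d :: complex
  assumes "d \<cdot>\<^sub>v v = w" "c * d = 1"
  shows "v = c \<cdot>\<^sub>v w"
proof -
  have "v = (c * d) \<cdot>\<^sub>v v" using assms(2) by simp
  also have "\<dots> = c \<cdot>\<^sub>v (d \<cdot>\<^sub>v v)" by (rule smult_smult_assoc[symmetric])
  finally show ?thesis using assms(1) by simp
qed

lemma adj_carrier: "A \<in> carrier_mat k m \<Longrightarrow> adj A \<in> carrier_mat m k"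
  by (simp add: adj_def)

lemma ip_adj:
  assumes "A \<in> carrier_mat m m" "x \<in> carrier_vec m" "y \<in> carrier_vec m"
  shows "ip x (A *\<^sub>v y) = ip (adj A *\<^sub>v x) y"
proof -
  have "ip x (A *\<^sub>v y) = (\<Sum>k<m. cnj (x $ k) * (\<Sum>j<m. A $$ (k, j) * y $ j))"
    using assms by (simp add: ip_def scalar_prod_def lessThan_atLeast0)
  also have "\<dots> = (\<Sum>j<m. \<Sum>k<m. cnj (x $ k) * A $$ (k, j) * y $ j)"
    unfolding sum_distrib_left by (subst sum.swap) (simp add: mult.left_commute mult.assoc)
  also have "\<dots> = (\<Sum>j<m. cnj (\<Sum>k<m. cnj (A $$ (k, j)) * x $ k) * y $ j)"
    by (simp add: sum_distrib_left sum_distrib_right mult.commute mult.left_commute)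
  also have "\<dots> = ip (adj A *\<^sub>v x) y"
    using assms by (simp add: ip_def adj_def scalar_prod_def lessThan_atLeast0)
  finally show ?thesis .
qed

lemma unitary_ip:
  assumes V: "unitary_m m V" and "x \<in> carrier_vec m" "y \<in> carrier_vec m"
  shows "ip (V *\<^sub>v x) (V *\<^sub>v y) = ip x y"
proof -
  have V': "V \<in> carrier_mat m m" "adj V * V = 1\<^sub>m m"
    using V unfolding unitary_m_def by auto
  have "ip (V *\<^sub>v x) (V *\<^sub>v y) = ip (adj V *\<^sub>v (V *\<^sub>v x)) y"
    by (rule ip_adj) (use V' assms in auto)
  also have "adj V *\<^sub>v (V *\<^sub>v x) = x"
    using V' assms by (metis adj_carrier assoc_mult_mat_vec one_mult_mat_vec)
  finally show ?thesis .
qed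

lemma eq_matI_mult_vec:
  fixes A B :: "complex mat"
  assumes "A \<in> carrier_mat m k" "B \<in> carrier_mat m k"
    and "\<And>v. v \<in> carrier_vec k \<Longrightarrow> A *\<^sub>v v = B *\<^sub>v v"
  shows "A = B"
proof (rule eq_matI)
  have col: "(C *\<^sub>v unit_vec k j) $ i = C $$ (i, j)"
    if "C \<in> carrier_mat m k" "i < m" "j < k" for C :: "complex mat" and i j
    using that by (simp add: scalar_prod_def unit_vec_def lessThan_atLeast0 if_distrib cong: if_cong)
  fix i j assume "i < dim_row B" "j < dim_col B"
  then show "A $$ (i, j) = B $$ (i, j)"
    using assms col[of A i j] col[of B i j] by (metis carrier_matD(1,2) unit_vec_carrier)
qed (use assms in auto)

lemma assoc_mult_mat_mat_vec:
  assumes "A \<in> carrier_mat m m" "B \<in> carrier_mat m m" "C \<in> carrier_mat m m" "v \<in> carrier_vec m"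
  shows "A * B * C *\<^sub>v v = A *\<^sub>v (B *\<^sub>v (C *\<^sub>v v))"
proof -
  have "A * B * C *\<^sub>v v = (A * B) *\<^sub>v (C *\<^sub>v v)"
    using assoc_mult_mat_vec[OF mult_carrier_mat[OF assms(1,2)] assms(3,4)] .
  also have "\<dots> = A *\<^sub>v (B *\<^sub>v (C *\<^sub>v v))"
    using assoc_mult_mat_vec[OF assms(1,2) mult_mat_vec_carrier[OF assms(3,4)]] .
  finally show ?thesis .
qed

lemma index_mult_mat_sum:
  assumes "A \<in> carrier_mat k l" "B \<in> carrier_mat l p" "i < k" "j < p"
  shows "(A * B) $$ (i, j) = (\<Sum>r<l. A $$ (i, r) * B $$ (r, j))"
  using assms by (simp add: scalar_prod_def lessThan_atLeast0)

lemma posdef_carrier: "posdef_m m R \<Longrightarrow> R \<in> carrier_mat m m"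
  unfolding posdef_m_def hermitian_m_def by blast

text \<open>If \<open>R\<^sup>2 v = c\<^sup>2 v\<close> then \<open>w = R v - c v\<close> satisfies \<open>R w = -c w\<close>, which positivity forbids
  unless \<open>w = 0\<close>.\<close>
lemma posdef_eigenvector_of_square:
  fixes c :: real
  assumes R: "posdef_m m R" and v: "v \<in> carrier_vec m" and c: "0 < c"
    and RR: "R *\<^sub>v (R *\<^sub>v v) = complex_of_real (c * c) \<cdot>\<^sub>v v"
  shows "R *\<^sub>v v = complex_of_real c \<cdot>\<^sub>v v"
proof -
  have Rc: "R \<in> carrier_mat m m" using posdef_carrier[OF R] .
  have Rv: "R *\<^sub>v v \<in> carrier_vec m" using Rc v by simp
  define w where "w = R *\<^sub>v v - complex_of_real c \<cdot>\<^sub>v v"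
  have w: "w \<in> carrier_vec m" unfolding w_def using Rv v by simp
  have "R *\<^sub>v w = R *\<^sub>v (R *\<^sub>v v) - complex_of_real c \<cdot>\<^sub>v (R *\<^sub>v v)"
    unfolding w_def using Rc Rv v by (simp add: mult_minus_distrib_mat_vec mult_mat_vec)
  also have "\<dots> = complex_of_real (- c) \<cdot>\<^sub>v w"
    unfolding RR w_def using Rc Rv v
    by (intro eq_vecI) (simp_all add: algebra_simps carrier_vecD[OF Rv] carrier_vecD[OF v])
  finally have Rw: "R *\<^sub>v w = complex_of_real (- c) \<cdot>\<^sub>v w" .
  have "w = 0\<^sub>v m"
  proof (rule ccontr)
    assume "w \<noteq> 0\<^sub>v m"
    then have "0 < Re (ip w (R *\<^sub>v w))"
      using R w unfolding posdef_m_def by blast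
    moreover have "Re (ip w (R *\<^sub>v w)) = - c * Re (ip w w)"
      unfolding Rw ip_smult_right[OF w w] by simp
    ultimately show False
      using mult_nonneg_nonneg[of c "Re (ip w w)"] c ip_self_nonneg[of w] by linarith
  qed
  show ?thesis
  proof (rule eq_vecI)
    fix i assume "i < dim_vec (complex_of_real c \<cdot>\<^sub>v v)"
    then have "i < m" using v by simp
    then show "(R *\<^sub>v v) $ i = (complex_of_real c \<cdot>\<^sub>v v) $ i"
      using arg_cong[OF \<open>w = 0\<^sub>v m\<close>, of "\<lambda>x. x $ i"] Rv v unfolding w_def by simp
  qed (use Rc v in simp)
qed

section \<open>Characters of the group \<open>Qset ns\<close>\<close>

lemma finite_Qset: "finite (Qset ns)"
proof (rule finite_subset)
  show "Qset ns \<subseteq> {q. \<forall>t. (t \<in> {..<length ns} \<longrightarrow> q t \<in> {..<sum_list ns}) \<and> (t \<notin> {..<length ns} \<longrightarrow> q t = 0)}"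
    unfolding Qset_def using elem_le_sum_list[of _ ns] by (auto simp: order_less_le_trans)
qed (intro finite_set_of_finite_funs; simp)

lemma qzero_in_Qset: "\<forall>t < length ns. 0 < ns ! t \<Longrightarrow> qzero \<in> Qset ns"
  unfolding Qset_def qzero_def by auto

lemma qadd_in_Qset: "\<forall>t < length ns. 0 < ns ! t \<Longrightarrow> qadd ns q q' \<in> Qset ns"
  unfolding Qset_def qadd_def by auto

lemma qadd_qzero: "qadd ns qzero qzero = qzero"
  unfolding qadd_def qzero_def by auto

lemma bij_betw_qadd:
  assumes ns: "\<forall>t < length ns. 0 < ns ! t" and r: "r \<in> Qset ns"
  shows "bij_betw (qadd ns r) (Qset ns) (Qset ns)"
proof -
  have "inj_on (qadd ns r) (Qset ns)"
  proof (rule inj_onI, rule ext)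
    fix q q' t assume q: "q \<in> Qset ns" "q' \<in> Qset ns" and eq: "qadd ns r q = qadd ns r q'"
    show "q t = q' t"
    proof (cases "t < length ns")
      case True
      then have "(r t + q t) mod (ns ! t) = (r t + q' t) mod (ns ! t)"
        using fun_cong[OF eq, of t] unfolding qadd_def by simp
      then have "q t mod (ns ! t) = q' t mod (ns ! t)"
        by (simp add: nat_mod_eq_iff)
      then show ?thesis using q True by (simp add: Qset_def)
    next
      case False
      then show ?thesis using q by (simp add: Qset_def)
    qed
  qed
  moreover have "qadd ns r ` Qset ns = Qset ns"
    by (rule endo_inj_surj[OF finite_Qset _ calculation]) (use qadd_in_Qset[OF ns] in auto)
  ultimately show ?thesis unfolding bij_betw_def by simp
qed

lemma sum_qadd_shift:
  assumes "\<forall>t < length ns. 0 < ns ! t" "r \<in> Qset ns"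
  shows "(\<Sum>q\<in>Qset ns. f (qadd ns r q)) = (\<Sum>q\<in>Qset ns. f q)"
  using sum.reindex_bij_betw[OF bij_betw_qadd[OF assms]] .

definition unity_root :: "nat \<Rightarrow> nat \<Rightarrow> complex" where
  "unity_root N k = cis (- (2 * pi * real k / real N))"

lemma chi_unity_root: "chi ns h q = (\<Prod>t<length ns. unity_root (ns ! t) (h t * q t))"
proof -
  have "exp (- (2 * complex_of_real pi * \<i> * of_nat k / of_nat N)) = unity_root N k" for k N
    unfolding unity_root_def cis_conv_exp by (simp add: field_simps)
  then show ?thesis by (simp only: chi_def)
qed

lemma unity_root_add: "unity_root N (a + b) = unity_root N a * unity_root N b"
  unfolding unity_root_def cis_mult by (simp add: add_divide_distrib distrib_left)

lemma unity_root_mod: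
  assumes "0 < N"
  shows "unity_root N (k mod N) = unity_root N k"
proof -
  have "unity_root N (N * (k div N)) = 1"
    unfolding unity_root_def using assms by (simp add: cis_cnj[symmetric] flip: mult.assoc)
  then show ?thesis
    using unity_root_add[of N "k mod N" "N * (k div N)"] by simp
qed

lemma cnj_unity_root_mult: "cnj (unity_root N k) * unity_root N k = 1"
  unfolding unity_root_def cis_cnj cis_mult by simp

lemma unity_root_inj:
  assumes "a < N" "b < N" "unity_root N a = unity_root N b"
  shows "a = b"
proof -
  have N: "0 < real N" using assms by simp
  have "cis (2 * pi * ((real b - real a) / real N)) = cnj (unity_root N b) * unity_root N a"
    unfolding unity_root_def cis_cnj cis_mult by (simp add: diff_divide_distrib right_diff_distrib)
  then have "cos (2 * pi * ((real b - real a) / real N)) = 1"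
    using assms(3) cnj_unity_root_mult by (metis cis.sel(1) one_complex.sel(1))
  then obtain k :: int where "2 * pi * ((real b - real a) / real N) = 2 * pi * real_of_int k"
    by (auto simp: cos_one_2pi_int)
  then have "(real b - real a) / real N = real_of_int k"
    using pi_gt_zero by (simp only: mult_cancel_left) simp
  then have k: "real b - real a = real_of_int k * real N"
    using N by (simp add: field_simps)
  moreover have "\<bar>real b - real a\<bar> < real N" using assms by auto
  ultimately have "\<bar>real_of_int k\<bar> < 1"
    using N by (simp add: abs_mult)
  then have "k = 0" by linarith
  then show ?thesis using k by simp
qed

lemma chi_qadd:
  assumes "\<forall>t < length ns. 0 < ns ! t"
  shows "chi ns h (qadd ns q q') = chi ns h q * chi ns h q'"
proof -
  have "unity_root N (k * ((a + b) mod N)) = unity_root N (k * a) * unity_root N (k * b)"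
    if "0 < N" for N k a b
  proof -
    have "unity_root N (k * ((a + b) mod N)) = unity_root N (k * (a + b))"
      using unity_root_mod[OF that, of "k * ((a + b) mod N)"] unity_root_mod[OF that, of "k * (a + b)"]
      by (simp add: mod_mult_right_eq)
    then show ?thesis by (simp add: distrib_left unity_root_add)
  qed
  then show ?thesis
    unfolding chi_unity_root qadd_def prod.distrib[symmetric] using assms by (intro prod.cong) auto
qed

lemma chi_qzero: "chi ns h qzero = 1"
  unfolding chi_unity_root qzero_def unity_root_def by simp

lemma chi_commute: "chi ns h q = chi ns q h"
  unfolding chi_def by (simp add: mult.commute)

lemma cnj_chi_mult: "cnj (chi ns h q) * chi ns h q = 1"
  unfolding chi_unity_root by (simp add: cnj_prod prod.distrib[symmetric] cnj_unity_root_mult)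

lemma chi_mult_cnj: "chi ns h q * cnj (chi ns h q) = 1"
  using cnj_chi_mult by (simp add: mult.commute)

lemma chi_mult_cnj_neq_1:
  assumes "chi ns h r \<noteq> chi ns h' r"
  shows "chi ns h r * cnj (chi ns h' r) \<noteq> 1"
proof
  assume "chi ns h r * cnj (chi ns h' r) = 1"
  then have "chi ns h r * (cnj (chi ns h' r) * chi ns h' r) = chi ns h' r"
    by (simp add: mult.assoc[symmetric])
  with assms show False by (simp add: cnj_chi_mult)
qed

lemma chi_separates:
  assumes ns: "\<forall>t < length ns. 0 < ns ! t" and h: "h \<in> Qset ns" "h' \<in> Qset ns" "h \<noteq> h'"
  obtains r where "r \<in> Qset ns" "chi ns h r \<noteq> chi ns h' r"
proof -
  obtain t where t: "h t \<noteq> h' t" using h(3) by auto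
  have tl: "t < length ns"
  proof (rule ccontr)
    assume "\<not> t < length ns"
    then have "h t = 0" "h' t = 0" using h(1,2) unfolding Qset_def by auto
    with t show False by simp
  qed
  have lt: "h t < ns ! t" "h' t < ns ! t" using h tl unfolding Qset_def by auto
  define r where "r = (\<lambda>s. if s = t then 1 else 0 :: nat)"
  have r: "r \<in> Qset ns" unfolding r_def Qset_def using lt t tl ns by auto
  have "chi ns g r = unity_root (ns ! t) (g t)" for g
  proof -
    have "chi ns g r = (\<Prod>s<length ns. if s = t then unity_root (ns ! t) (g t) else 1)"
      unfolding chi_unity_root r_def by (intro prod.cong) (auto simp: unity_root_def)
    then show ?thesis using tl by simp
  qed
  then have "chi ns h r \<noteq> chi ns h' r" using unity_root_inj[OF lt] t by auto
  then show thesis using r that by blast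
qed

lemma chi_orthogonal:
  assumes ns: "\<forall>t < length ns. 0 < ns ! t" and h: "h \<in> Qset ns" "h' \<in> Qset ns"
  shows "(\<Sum>q\<in>Qset ns. chi ns h q * cnj (chi ns h' q)) = (if h = h' then of_nat (card (Qset ns)) else 0)"
proof (cases "h = h'")
  case False
  obtain r where r: "r \<in> Qset ns" "chi ns h r \<noteq> chi ns h' r"
    using chi_separates[OF ns h False] .
  define f where "f q = chi ns h q * cnj (chi ns h' q)" for q
  have "f r \<noteq> 1"
    unfolding f_def by (rule chi_mult_cnj_neq_1[OF r(2)])
  have "(\<Sum>q\<in>Qset ns. f q) = (\<Sum>q\<in>Qset ns. f (qadd ns r q))"
    by (rule sum_qadd_shift[OF ns r(1), symmetric])
  also have "\<dots> = f r * (\<Sum>q\<in>Qset ns. f q)"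
    unfolding f_def chi_qadd[OF ns] sum_distrib_left by (intro sum.cong refl) (simp add: ac_simps)
  finally have "(1 - f r) * (\<Sum>q\<in>Qset ns. f q) = 0" by (simp add: algebra_simps)
  with \<open>f r \<noteq> 1\<close> False show ?thesis unfolding f_def by simp
qed (simp add: chi_mult_cnj)

section \<open>Fourier analysis of a geometrically uniform frame\<close>

locale gu_frame =
  fixes m n :: nat and ns :: "nat list"
    and U :: "nat \<Rightarrow> complex mat" and \<phi> :: "complex vec"
    and \<psi> :: "nat \<Rightarrow> (nat \<Rightarrow> nat)"
  assumes m_pos: "0 < m"
    and ns_pos: "\<forall>t < length ns. 0 < ns ! t"
    and phi_dim: "\<phi> \<in> carrier_vec m"
    and unitary: "\<forall>i < n. unitary_m m (U i)"
    and closed: "\<forall>i < n. \<forall>j < n. \<exists>k < n. U i * U j = U k"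
    and iso_bij: "bij_betw \<psi> {..<n} (Qset ns)"
    and iso_hom: "\<forall>i < n. \<forall>j < n. \<forall>k < n. U i * U j = U k \<longrightarrow> \<psi> k = qadd ns (\<psi> i) (\<psi> j)"
    and spanning: "\<forall>v \<in> carrier_vec m. \<exists>c \<in> carrier_vec n. v = Phi_mat m n U \<phi> *\<^sub>v c"
begin

abbreviation "Q \<equiv> Qset ns"
abbreviation "index_of q \<equiv> the_inv_into {..<n} \<psi> q"
abbreviation "U_at q \<equiv> U (index_of q)"
abbreviation "phi_at \<equiv> phiq n U \<psi> \<phi>"
abbreviation "phi_hat \<equiv> phihat ns m n U \<psi> \<phi>"
abbreviation "s_hat \<equiv> shat ns n U \<psi> \<phi>"
abbreviation "\<sigma> \<equiv> sigma ns n U \<psi> \<phi>"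
abbreviation "I \<equiv> Iset ns n U \<psi> \<phi>"
abbreviation "u \<equiv> uvec ns m n U \<psi> \<phi>"
abbreviation "S \<equiv> frame_op m n U \<phi>"
abbreviation "sqrt_n \<equiv> complex_of_real (sqrt (real n))"

lemma card_Q: "card Q = n"
  using bij_betw_same_card[OF iso_bij] by simp

lemma n_pos: "0 < n"
proof -
  have "Q \<noteq> {}" using qzero_in_Qset[OF ns_pos] by auto
  then show ?thesis using card_Q finite_Qset card_gt_0_iff by metis
qed

lemma sqrt_n_nonzero: "sqrt_n \<noteq> 0"
  using n_pos by simp

lemma sqrt_n_square: "sqrt_n * sqrt_n = of_nat n"
  by (simp flip: of_real_mult)

lemma psi_in_Q: "i < n \<Longrightarrow> \<psi> i \<in> Q"
  using iso_bij bij_betwE by blast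

lemma index_of_psi: "i < n \<Longrightarrow> index_of (\<psi> i) = i"
  using iso_bij by (simp add: bij_betw_def the_inv_into_f_f)

lemma index_of_less: "q \<in> Q \<Longrightarrow> index_of q < n"
  using iso_bij the_inv_into_into[of \<psi> "{..<n}" q "{..<n}"] unfolding bij_betw_def by auto

lemma psi_index_of: "q \<in> Q \<Longrightarrow> \<psi> (index_of q) = q"
  using iso_bij f_the_inv_into_f[of \<psi> "{..<n}" q] unfolding bij_betw_def by auto

lemma U_at_psi: "i < n \<Longrightarrow> U_at (\<psi> i) = U i"
  by (simp add: index_of_psi)

lemma unitary_U_at: "q \<in> Q \<Longrightarrow> unitary_m m (U_at q)"
  using unitary index_of_less by blast

lemma U_at_carrier: "q \<in> Q \<Longrightarrow> U_at q \<in> carrier_mat m m"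
  using unitary_U_at unfolding unitary_m_def by blast

lemma adj_U_at_mult: "q \<in> Q \<Longrightarrow> adj (U_at q) * U_at q = 1\<^sub>m m"
  using unitary_U_at unfolding unitary_m_def by blast

lemma U_at_qadd:
  assumes "a \<in> Q" "b \<in> Q"
  shows "U_at (qadd ns a b) = U_at a * U_at b"
proof -
  obtain k where k: "k < n" "U_at a * U_at b = U k"
    using closed index_of_less assms by blast
  then have "\<psi> k = qadd ns (\<psi> (index_of a)) (\<psi> (index_of b))"
    using iso_hom index_of_less assms by blast
  then have "\<psi> k = qadd ns a b"
    using psi_index_of assms by simp
  then have "index_of (qadd ns a b) = k"
    using index_of_psi[OF k(1)] by simp
  then show ?thesis using k by simp
qed

lemma U_at_qzero: "U_at qzero = 1\<^sub>m m"
proof -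
  have z: "qzero \<in> Q" using qzero_in_Qset[OF ns_pos] .
  let ?V = "U_at qzero"
  have V: "?V \<in> carrier_mat m m" "adj ?V \<in> carrier_mat m m"
    using U_at_carrier[OF z] adj_carrier by auto
  have "?V = (adj ?V * ?V) * ?V" using adj_U_at_mult[OF z] V by simp
  also have "\<dots> = adj ?V * (?V * ?V)" using V by (simp add: assoc_mult_mat)
  also have "?V * ?V = ?V" using U_at_qadd[OF z z] qadd_qzero by simp
  finally show ?thesis using adj_U_at_mult[OF z] by simp
qed

lemma phi_at_eq: "phi_at q = U_at q *\<^sub>v \<phi>"
  unfolding phiq_def fvec_def ..

lemma phi_at_carrier: "q \<in> Q \<Longrightarrow> phi_at q \<in> carrier_vec m"
  unfolding phi_at_eq using U_at_carrier phi_dim by (rule mult_mat_vec_carrier)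

lemma phi_at_qzero: "phi_at qzero = \<phi>"
  unfolding phi_at_eq U_at_qzero using phi_dim by simp

lemma fvec_eq_phi_at: "i < n \<Longrightarrow> fvec U \<phi> i = phi_at (\<psi> i)"
  unfolding phi_at_eq fvec_def by (simp add: U_at_psi)

lemma U_at_phi_at:
  assumes "r \<in> Q" "q \<in> Q"
  shows "U_at r *\<^sub>v phi_at q = phi_at (qadd ns r q)"
  unfolding phi_at_eq U_at_qadd[OF assms]
  using assoc_mult_mat_vec[OF U_at_carrier[OF assms(1)] U_at_carrier[OF assms(2)] phi_dim] by simp

lemma phi_hat_eq: "phi_hat h = vec m (\<lambda>r. \<Sum>q\<in>Q. (chi ns h q / sqrt_n) * phi_at q $ r)"
  unfolding phihat_def by (simp add: sum_distrib_left)

lemma phi_hat_carrier: "phi_hat h \<in> carrier_vec m"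
  unfolding phihat_def by (rule vec_carrier)

lemma U_at_phi_hat:
  assumes r: "r \<in> Q"
  shows "U_at r *\<^sub>v phi_hat h = cnj (chi ns h r) \<cdot>\<^sub>v phi_hat h"
proof -
  have "U_at r *\<^sub>v phi_hat h = vec m (\<lambda>k. \<Sum>q\<in>Q. (chi ns h q / sqrt_n) * (U_at r *\<^sub>v phi_at q) $ k)"
    unfolding phi_hat_eq by (rule mult_mat_vec_sum[OF U_at_carrier[OF r] phi_at_carrier])
  also have "\<dots> = vec m (\<lambda>k. \<Sum>q\<in>Q. (chi ns h q / sqrt_n) * phi_at (qadd ns r q) $ k)"
    using U_at_phi_at[OF r] by simp
  finally have "chi ns h r \<cdot>\<^sub>v (U_at r *\<^sub>v phi_hat h)
      = vec m (\<lambda>k. \<Sum>q\<in>Q. (chi ns h (qadd ns r q) / sqrt_n) * phi_at (qadd ns r q) $ k)"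
    unfolding chi_qadd[OF ns_pos] by (intro eq_vecI) (auto simp: sum_distrib_left intro!: sum.cong)
  also have "\<dots> = phi_hat h"
    unfolding phi_hat_eq sum_qadd_shift[OF ns_pos r, where f = "\<lambda>q. chi ns h q / sqrt_n * phi_at q $ _"] ..
  finally show ?thesis
    by (rule smult_vec_cancel_left[OF _ cnj_chi_mult])
qed

lemma adj_U_at_phi_hat:
  assumes r: "r \<in> Q"
  shows "adj (U_at r) *\<^sub>v phi_hat h = chi ns h r \<cdot>\<^sub>v phi_hat h"
proof -
  let ?A = "adj (U_at r)" and ?c = "chi ns h r"
  have A: "?A \<in> carrier_mat m m" using adj_carrier U_at_carrier[OF r] by blast
  have "cnj ?c \<cdot>\<^sub>v (?A *\<^sub>v phi_hat h) = ?A *\<^sub>v (U_at r *\<^sub>v phi_hat h)"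
    unfolding U_at_phi_hat[OF r] using mult_mat_vec[OF A phi_hat_carrier] by simp
  also have "\<dots> = phi_hat h"
    using A U_at_carrier[OF r] phi_hat_carrier adj_U_at_mult[OF r]
    by (metis assoc_mult_mat_vec one_mult_mat_vec)
  finally have "cnj ?c \<cdot>\<^sub>v (?A *\<^sub>v phi_hat h) = phi_hat h" .
  then show ?thesis
    by (rule smult_vec_cancel_left[OF _ chi_mult_cnj])
qed

lemma ip_phi_phi_hat: "ip \<phi> (phi_hat h) = s_hat h"
proof -
  have "ip \<phi> (phi_hat h) = (\<Sum>q\<in>Q. (chi ns h q / sqrt_n) * ip \<phi> (phi_at q))"
    unfolding phi_hat_eq by (rule ip_sum_right[OF phi_dim])
  then show ?thesis
    unfolding shat_def sfun_def phi_at_qzero by (simp add: sum_distrib_left)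
qed

lemma ip_phi_at_phi_hat:
  assumes q: "q \<in> Q"
  shows "ip (phi_at q) (phi_hat h) = chi ns h q * s_hat h"
proof -
  have "ip (phi_hat h) (phi_at q) = ip (adj (U_at q) *\<^sub>v phi_hat h) \<phi>"
    unfolding phi_at_eq by (rule ip_adj[OF U_at_carrier[OF q] phi_hat_carrier phi_dim])
  also have "\<dots> = cnj (chi ns h q) * ip (phi_hat h) \<phi>"
    unfolding adj_U_at_phi_hat[OF q] ip_smult_left ..
  also have "ip (phi_hat h) \<phi> = cnj (s_hat h)"
    using ip_commute[OF phi_dim phi_hat_carrier] ip_phi_phi_hat by simp
  finally show ?thesis
    using ip_commute[OF phi_hat_carrier phi_at_carrier[OF q]] by simp
qed

lemma ip_phi_hat_self: "ip (phi_hat h) (phi_hat h) = sqrt_n * cnj (s_hat h)"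
proof -
  have "ip (phi_hat h) (phi_hat h) = (\<Sum>q\<in>Q. (chi ns h q / sqrt_n) * ip (phi_hat h) (phi_at q))"
    by (subst (2) phi_hat_eq) (rule ip_sum_right[OF phi_hat_carrier])
  also have "\<dots> = (\<Sum>q\<in>Q. (chi ns h q * cnj (chi ns h q)) * cnj (s_hat h) / sqrt_n)"
  proof (intro sum.cong refl)
    fix q assume q: "q \<in> Q"
    have "ip (phi_hat h) (phi_at q) = cnj (chi ns h q) * cnj (s_hat h)"
      using ip_commute[OF phi_at_carrier[OF q] phi_hat_carrier] ip_phi_at_phi_hat[OF q] by simp
    then show "chi ns h q / sqrt_n * ip (phi_hat h) (phi_at q) = (chi ns h q * cnj (chi ns h q)) * cnj (s_hat h) / sqrt_n"
      by simp
  qed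
  also have "\<dots> = of_nat n * cnj (s_hat h) / sqrt_n"
    by (simp add: chi_mult_cnj card_Q)
  also have "\<dots> = sqrt_n * cnj (s_hat h)"
    using sqrt_n_square sqrt_n_nonzero by (simp add: field_simps)
  finally show ?thesis .
qed

text \<open>By the Gram identity above, \<open>\<surd>n \<cdot> cnj (s_hat h)\<close> is a squared norm.\<close>
lemma s_hat_real_nonneg: "s_hat h = complex_of_real (Re (s_hat h))" "0 \<le> Re (s_hat h)"
proof -
  obtain N where N: "ip (phi_hat h) (phi_hat h) = complex_of_real N" "0 \<le> N"
    using ip_self sum_nonneg by (metis zero_le_power2)
  then have "cnj (s_hat h) = complex_of_real (N / sqrt (real n))"
    using ip_phi_hat_self sqrt_n_nonzero by (simp add: field_simps)
  then have "s_hat h = complex_of_real (N / sqrt (real n))"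
    by (metis complex_cnj_cnj complex_cnj_complex_of_real)
  then show "s_hat h = complex_of_real (Re (s_hat h))" "0 \<le> Re (s_hat h)"
    using N(2) by simp_all
qed

lemma sigma_nonneg: "0 \<le> \<sigma> h"
  unfolding sigma_def using s_hat_real_nonneg(2) by simp

lemma sigma_square: "(\<sigma> h)\<^sup>2 = sqrt (real n) * Re (s_hat h)"
proof -
  have "(root 4 (real n))\<^sup>2 = sqrt (real n)"
    using real_root_mult_exp[of 2 2 "real n"] by (simp add: sqrt_def)
  then show ?thesis
    unfolding sigma_def power_mult_distrib using s_hat_real_nonneg(2) by simp
qed

lemma sigma_square_complex: "complex_of_real ((\<sigma> h)\<^sup>2) = sqrt_n * s_hat h"
  unfolding sigma_square using s_hat_real_nonneg(1)[of h] by (metis of_real_mult)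

lemma ip_phi_hat_self_sigma: "ip (phi_hat h) (phi_hat h) = complex_of_real ((\<sigma> h)\<^sup>2)"
  unfolding ip_phi_hat_self sigma_square_complex using s_hat_real_nonneg(1)[of h]
  by (metis complex_cnj_complex_of_real)

lemma I_subset_Q: "I \<subseteq> Q"
  unfolding Iset_def by auto

lemma finite_I: "finite I"
  using finite_subset[OF I_subset_Q finite_Qset] .

lemma sigma_pos: "h \<in> I \<Longrightarrow> 0 < \<sigma> h"
  using sigma_nonneg[of h] unfolding Iset_def by auto

lemma sigma_nonzero: "h \<in> I \<Longrightarrow> \<sigma> h \<noteq> 0"
  unfolding Iset_def by simp

lemma phi_hat_eq_0: "h \<in> Q \<Longrightarrow> h \<notin> I \<Longrightarrow> phi_hat h = 0\<^sub>v m"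
  using ip_phi_hat_self_sigma[of h] ip_self_eq_0[OF phi_hat_carrier] unfolding Iset_def by simp

lemma u_carrier: "u h \<in> carrier_vec m"
  unfolding uvec_def using phi_hat_carrier by simp

lemma phi_hat_eq_u: "h \<in> I \<Longrightarrow> phi_hat h = complex_of_real (\<sigma> h) \<cdot>\<^sub>v u h"
  unfolding uvec_def smult_smult_assoc using sigma_pos[of h] phi_hat_carrier by simp

lemma phi_hat_orthogonal:
  assumes h: "h \<in> Q" "h' \<in> Q" "h \<noteq> h'"
  shows "ip (phi_hat h) (phi_hat h') = 0"
proof -
  obtain r where r: "r \<in> Q" "chi ns h r \<noteq> chi ns h' r"
    using chi_separates[OF ns_pos h] .
  have "ip (phi_hat h) (phi_hat h') = ip (U_at r *\<^sub>v phi_hat h) (U_at r *\<^sub>v phi_hat h')"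
    using unitary_ip[OF unitary_U_at[OF r(1)] phi_hat_carrier phi_hat_carrier] by simp
  also have "\<dots> = (chi ns h r * cnj (chi ns h' r)) * ip (phi_hat h) (phi_hat h')"
    unfolding U_at_phi_hat[OF r(1)] ip_smult_left ip_smult_right[OF phi_hat_carrier phi_hat_carrier]
    by simp
  finally have "(1 - chi ns h r * cnj (chi ns h' r)) * ip (phi_hat h) (phi_hat h') = 0"
    by (simp add: algebra_simps)
  with chi_mult_cnj_neq_1[OF r(2)] show ?thesis by simp
qed

lemma u_orthonormal:
  assumes "h \<in> I" "h' \<in> I"
  shows "ip (u h) (u h') = (if h = h' then 1 else 0)"
proof -
  have ip_u: "ip (u h) (u h') = complex_of_real (1 / \<sigma> h) * complex_of_real (1 / \<sigma> h') * ip (phi_hat h) (phi_hat h')"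
    unfolding uvec_def ip_smult_left ip_smult_right[OF phi_hat_carrier phi_hat_carrier] by simp
  show ?thesis
  proof (cases "h = h'")
    case True
    then show ?thesis
      using ip_u ip_phi_hat_self_sigma[of h] sigma_pos[OF assms(1)] by (simp add: power2_eq_square)
  next
    case False
    then show ?thesis
      using ip_u phi_hat_orthogonal assms I_subset_Q by auto
  qed
qed

lemma fourier_inversion:
  assumes q: "q \<in> Q"
  shows "phi_at q = vec m (\<lambda>k. \<Sum>h\<in>Q. (cnj (chi ns h q) / sqrt_n) * phi_hat h $ k)"
proof (rule eq_vecI)
  fix k assume "k < dim_vec (vec m (\<lambda>k. \<Sum>h\<in>Q. (cnj (chi ns h q) / sqrt_n) * phi_hat h $ k))"
  then have k: "k < m" by simp
  have "(\<Sum>h\<in>Q. (cnj (chi ns h q) / sqrt_n) * phi_hat h $ k)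
      = (\<Sum>h\<in>Q. \<Sum>q'\<in>Q. (chi ns h q' * cnj (chi ns h q)) / (sqrt_n * sqrt_n) * phi_at q' $ k)"
    unfolding phi_hat_eq using k by (simp add: sum_distrib_left ac_simps)
  also have "\<dots> = (\<Sum>q'\<in>Q. (\<Sum>h\<in>Q. chi ns h q' * cnj (chi ns h q)) / (sqrt_n * sqrt_n) * phi_at q' $ k)"
    by (subst sum.swap) (simp add: sum_distrib_right sum_divide_distrib)
  also have "\<dots> = (\<Sum>q'\<in>Q. (if q' = q then phi_at q' $ k else 0))"
  proof (intro sum.cong refl)
    fix q' assume q': "q' \<in> Q"
    have "(\<Sum>h\<in>Q. chi ns h q' * cnj (chi ns h q)) = (\<Sum>h\<in>Q. chi ns q' h * cnj (chi ns q h))"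
      by (simp add: chi_commute[of ns _ q'] chi_commute[of ns _ q])
    then show "(\<Sum>h\<in>Q. chi ns h q' * cnj (chi ns h q)) / (sqrt_n * sqrt_n) * phi_at q' $ k
        = (if q' = q then phi_at q' $ k else 0)"
      using chi_orthogonal[OF ns_pos q' q] card_Q sqrt_n_square n_pos by simp
  qed
  also have "\<dots> = phi_at q $ k"
    using q finite_Qset by simp
  finally show "phi_at q $ k = vec m (\<lambda>k. \<Sum>h\<in>Q. (cnj (chi ns h q) / sqrt_n) * phi_hat h $ k) $ k"
    using k by simp
qed (use phi_at_carrier[OF q] in simp)

lemma phi_at_eq_sum_u:
  assumes q: "q \<in> Q"
  shows "phi_at q = vec m (\<lambda>k. \<Sum>h\<in>I. (cnj (chi ns h q) * \<sigma> h / sqrt_n) * u h $ k)"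
proof -
  have "(\<Sum>h\<in>Q. (cnj (chi ns h q) / sqrt_n) * phi_hat h $ k) = (\<Sum>h\<in>I. (cnj (chi ns h q) * \<sigma> h / sqrt_n) * u h $ k)"
    if k: "k < m" for k
  proof -
    have "(\<Sum>h\<in>Q. (cnj (chi ns h q) / sqrt_n) * phi_hat h $ k) = (\<Sum>h\<in>I. (cnj (chi ns h q) / sqrt_n) * phi_hat h $ k)"
      by (rule sum.mono_neutral_right[OF finite_Qset I_subset_Q]) (use phi_hat_eq_0 k in auto)
    also have "\<dots> = (\<Sum>h\<in>I. (cnj (chi ns h q) * \<sigma> h / sqrt_n) * u h $ k)"
      using k u_carrier[THEN carrier_vecD] by (intro sum.cong refl) (simp add: phi_hat_eq_u)
    finally show ?thesis .
  qed
  then show ?thesis by (subst fourier_inversion[OF q]) (auto intro!: eq_vecI)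
qed

lemma phi_eq_sum_u: "\<phi> = vec m (\<lambda>k. \<Sum>h\<in>I. (complex_of_real (\<sigma> h) / sqrt_n) * u h $ k)"
  using phi_at_eq_sum_u[OF qzero_in_Qset[OF ns_pos]] unfolding phi_at_qzero chi_qzero by simp

text \<open>Every vector is a combination of the frame vectors, and these are combinations of the \<open>u h\<close>.\<close>
lemma u_spans:
  assumes v: "v \<in> carrier_vec m"
  obtains d where "v = vec m (\<lambda>k. \<Sum>h\<in>I. d h * u h $ k)"
proof -
  obtain c where c: "c \<in> carrier_vec n" "v = Phi_mat m n U \<phi> *\<^sub>v c"
    using spanning v by blast
  define a where "a h q = cnj (chi ns h q) * \<sigma> h / sqrt_n" for h q
  have "v $ k = (\<Sum>h\<in>I. (\<Sum>i<n. c $ i * a h (\<psi> i)) * u h $ k)" if k: "k < m" for k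
  proof -
    have "v $ k = (\<Sum>i<n. c $ i * phi_at (\<psi> i) $ k)"
      unfolding c(2) Phi_mat_def using k c(1) fvec_eq_phi_at
      by (simp add: scalar_prod_def row_def lessThan_atLeast0 mult.commute)
    also have "\<dots> = (\<Sum>i<n. c $ i * (\<Sum>h\<in>I. a h (\<psi> i) * u h $ k))"
      using phi_at_eq_sum_u[OF psi_in_Q] k unfolding a_def by simp
    also have "\<dots> = (\<Sum>h\<in>I. (\<Sum>i<n. c $ i * a h (\<psi> i)) * u h $ k)"
      unfolding sum_distrib_left sum_distrib_right by (subst sum.swap) (simp add: ac_simps)
    finally show ?thesis .
  qed
  then have "v = vec m (\<lambda>k. \<Sum>h\<in>I. (\<Sum>i<n. c $ i * a h (\<psi> i)) * u h $ k)"
    using v by (intro eq_vecI) auto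
  then show thesis by (rule that)
qed

lemma u_expansion:
  assumes v: "v \<in> carrier_vec m"
  shows "v = vec m (\<lambda>k. \<Sum>h\<in>I. ip (u h) v * u h $ k)"
proof -
  obtain d where d: "v = vec m (\<lambda>k. \<Sum>h\<in>I. d h * u h $ k)"
    using u_spans[OF v] .
  have "ip (u h) v = d h" if h: "h \<in> I" for h
  proof -
    have "ip (u h) v = (\<Sum>h'\<in>I. d h' * ip (u h) (u h'))"
      by (subst d) (rule ip_sum_right[OF u_carrier])
    also have "\<dots> = (\<Sum>h'\<in>I. if h' = h then d h' else 0)"
      using u_orthonormal h by (intro sum.cong refl) auto
    also have "\<dots> = d h"
      using h finite_I by simp
    finally show ?thesis .
  qed
  then show ?thesis
    by (subst (1) d) (auto intro!: eq_vecI sum.cong)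
qed

lemma u_expansion_eq_0:
  assumes "v \<in> carrier_vec m" "\<And>h. h \<in> I \<Longrightarrow> ip (u h) v = 0"
  shows "v = 0\<^sub>v m"
  using u_expansion[OF assms(1)] assms(2) by (auto intro!: eq_vecI)

lemma eq_mat_on_u:
  assumes A: "A \<in> carrier_mat m m" and B: "B \<in> carrier_mat m m"
    and eq: "\<And>h. h \<in> I \<Longrightarrow> A *\<^sub>v u h = B *\<^sub>v u h"
  shows "A = B"
proof (rule eq_matI_mult_vec[OF A B])
  fix v :: "complex vec" assume v: "v \<in> carrier_vec m"
  have "A *\<^sub>v v = vec m (\<lambda>k. \<Sum>h\<in>I. ip (u h) v * (A *\<^sub>v u h) $ k)"
    by (subst u_expansion[OF v]) (rule mult_mat_vec_sum[OF A u_carrier])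
  also have "\<dots> = vec m (\<lambda>k. \<Sum>h\<in>I. ip (u h) v * (B *\<^sub>v u h) $ k)"
    using eq by simp
  also have "\<dots> = B *\<^sub>v v"
    by (subst (2) u_expansion[OF v]) (rule mult_mat_vec_sum[OF B u_carrier, symmetric])
  finally show "A *\<^sub>v v = B *\<^sub>v v" .
qed

lemma I_nonempty: "I \<noteq> {}"
  using u_expansion_eq_0[of "unit_vec m 0"] m_pos unit_vec_nonzero by auto

section \<open>The frame operator and its inverse square roots\<close>

lemma S_carrier: "S \<in> carrier_mat m m"
  unfolding frame_op_def by simp

lemma S_mult_vec:
  assumes x: "x \<in> carrier_vec m"
  shows "S *\<^sub>v x = vec m (\<lambda>r. \<Sum>q\<in>Q. ip (phi_at q) x * phi_at q $ r)"
proof (rule eq_vecI)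
  fix r assume "r < dim_vec (vec m (\<lambda>r. \<Sum>q\<in>Q. ip (phi_at q) x * phi_at q $ r))"
  then have r: "r < m" by simp
  have "(S *\<^sub>v x) $ r = (\<Sum>c<m. (\<Sum>i<n. fvec U \<phi> i $ r * cnj (fvec U \<phi> i $ c)) * x $ c)"
    using r x unfolding frame_op_def by (simp add: scalar_prod_def row_def lessThan_atLeast0)
  also have "\<dots> = (\<Sum>i<n. ip (phi_at (\<psi> i)) x * phi_at (\<psi> i) $ r)"
    unfolding ip_def sum_distrib_left sum_distrib_right
    by (subst sum.swap) (simp add: ac_simps fvec_eq_phi_at phi_at_carrier[OF psi_in_Q, THEN carrier_vecD])
  also have "\<dots> = (\<Sum>q\<in>Q. ip (phi_at q) x * phi_at q $ r)"
    by (rule sum.reindex_bij_betw[OF iso_bij])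
  finally show "(S *\<^sub>v x) $ r = vec m (\<lambda>r. \<Sum>q\<in>Q. ip (phi_at q) x * phi_at q $ r) $ r"
    using r by simp
qed (use S_carrier in simp)

lemma S_phi_hat: "S *\<^sub>v phi_hat h = (sqrt_n * s_hat h) \<cdot>\<^sub>v phi_hat h"
proof -
  have "S *\<^sub>v phi_hat h = vec m (\<lambda>r. \<Sum>q\<in>Q. (chi ns h q * s_hat h) * phi_at q $ r)"
    unfolding S_mult_vec[OF phi_hat_carrier] using ip_phi_at_phi_hat by simp
  also have "\<dots> = (sqrt_n * s_hat h) \<cdot>\<^sub>v phi_hat h"
    by (subst phi_hat_eq) (rule eq_vecI, use sqrt_n_nonzero in \<open>auto simp: sum_distrib_left intro!: sum.cong\<close>)
  finally show ?thesis .
qed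

lemma S_u: "h \<in> I \<Longrightarrow> S *\<^sub>v u h = complex_of_real ((\<sigma> h)\<^sup>2) \<cdot>\<^sub>v u h"
  unfolding uvec_def mult_mat_vec[OF S_carrier phi_hat_carrier] S_phi_hat sigma_square_complex[symmetric]
  by (simp add: smult_smult_assoc mult.commute)

lemma U_at_u: "q \<in> Q \<Longrightarrow> U_at q *\<^sub>v u h = cnj (chi ns h q) \<cdot>\<^sub>v u h"
  unfolding uvec_def using mult_mat_vec[OF U_at_carrier phi_hat_carrier] U_at_phi_hat
  by (simp add: smult_smult_assoc mult.commute)

definition u_diag_mat :: "((nat \<Rightarrow> nat) \<Rightarrow> complex) \<Rightarrow> complex mat" where
  "u_diag_mat d = mat m m (\<lambda>(r, k). \<Sum>h\<in>I. d h * u h $ r * cnj (u h $ k))"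

lemma u_diag_mat_carrier: "u_diag_mat d \<in> carrier_mat m m"
  unfolding u_diag_mat_def by simp

lemma u_diag_mat_mult_vec:
  assumes x: "x \<in> carrier_vec m"
  shows "u_diag_mat d *\<^sub>v x = vec m (\<lambda>r. \<Sum>h\<in>I. (d h * ip (u h) x) * u h $ r)"
proof (rule eq_vecI)
  fix r assume "r < dim_vec (vec m (\<lambda>r. \<Sum>h\<in>I. (d h * ip (u h) x) * u h $ r))"
  then have r: "r < m" by simp
  have "(u_diag_mat d *\<^sub>v x) $ r = (\<Sum>k<m. (\<Sum>h\<in>I. d h * u h $ r * cnj (u h $ k)) * x $ k)"
    using r x unfolding u_diag_mat_def by (simp add: scalar_prod_def row_def lessThan_atLeast0)
  also have "\<dots> = (\<Sum>h\<in>I. (d h * ip (u h) x) * u h $ r)"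
    unfolding ip_def sum_distrib_left sum_distrib_right
    by (subst sum.swap) (simp add: ac_simps u_carrier[THEN carrier_vecD])
  finally show "(u_diag_mat d *\<^sub>v x) $ r = vec m (\<lambda>r. \<Sum>h\<in>I. (d h * ip (u h) x) * u h $ r) $ r"
    using r by simp
qed (simp add: u_diag_mat_def)

lemma u_diag_mat_u:
  assumes h: "h \<in> I"
  shows "u_diag_mat d *\<^sub>v u h = d h \<cdot>\<^sub>v u h"
proof -
  have "u_diag_mat d *\<^sub>v u h = vec m (\<lambda>r. \<Sum>h'\<in>I. if h' = h then d h * u h $ r else 0)"
    unfolding u_diag_mat_mult_vec[OF u_carrier] by (rule eq_vecI) (auto simp: u_orthonormal[OF _ h] intro!: sum.cong)
  also have "\<dots> = d h \<cdot>\<^sub>v u h"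
    using h finite_I u_carrier[of h] by (auto intro!: eq_vecI)
  finally show ?thesis .
qed

text \<open>A matrix diagonal in the basis \<open>u\<close> commutes with every \<open>U_at q\<close>, since the \<open>u h\<close> are
  common eigenvectors of the group; hence it maps the frame to a geometrically uniform one.\<close>
lemma u_diagonal_commute_U:
  assumes A: "A \<in> carrier_mat m m" and d: "\<And>h. h \<in> I \<Longrightarrow> A *\<^sub>v u h = d h \<cdot>\<^sub>v u h"
    and i: "i < n"
  shows "A *\<^sub>v fvec U \<phi> i = U i *\<^sub>v (A *\<^sub>v \<phi>)"
proof -
  have q: "\<psi> i \<in> Q" using psi_in_Q[OF i] .
  have V: "U_at (\<psi> i) \<in> carrier_mat m m" using U_at_carrier[OF q] .
  have AV: "A * U_at (\<psi> i) = U_at (\<psi> i) * A"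
  proof (rule eq_mat_on_u)
    fix h assume h: "h \<in> I"
    have "A * U_at (\<psi> i) *\<^sub>v u h = A *\<^sub>v (U_at (\<psi> i) *\<^sub>v u h)"
      using assoc_mult_mat_vec[OF A V u_carrier] .
    also have "\<dots> = (cnj (chi ns h (\<psi> i)) * d h) \<cdot>\<^sub>v u h"
      unfolding U_at_u[OF q] mult_mat_vec[OF A u_carrier] d[OF h] by (simp add: smult_smult_assoc)
    also have "\<dots> = U_at (\<psi> i) *\<^sub>v (A *\<^sub>v u h)"
      unfolding d[OF h] mult_mat_vec[OF V u_carrier] U_at_u[OF q] by (simp add: smult_smult_assoc mult.commute)
    also have "\<dots> = U_at (\<psi> i) * A *\<^sub>v u h"
      using assoc_mult_mat_vec[OF V A u_carrier] by simp
    finally show "A * U_at (\<psi> i) *\<^sub>v u h = U_at (\<psi> i) * A *\<^sub>v u h" .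
  qed (use A V in auto)
  have "A *\<^sub>v fvec U \<phi> i = (A * U_at (\<psi> i)) *\<^sub>v \<phi>"
    using assoc_mult_mat_vec[OF A V phi_dim] U_at_psi[OF i] by (simp add: fvec_def)
  also have "\<dots> = (U_at (\<psi> i) * A) *\<^sub>v \<phi>"
    unfolding AV ..
  also have "\<dots> = U i *\<^sub>v (A *\<^sub>v \<phi>)"
    using assoc_mult_mat_vec[OF V A phi_dim] U_at_psi[OF i] by simp
  finally show ?thesis .
qed

lemma u_diagonal_mult_phi:
  assumes A: "A \<in> carrier_mat m m" and d: "\<And>h. h \<in> I \<Longrightarrow> A *\<^sub>v u h = d h \<cdot>\<^sub>v u h"
  shows "A *\<^sub>v \<phi> = vec m (\<lambda>k. (1 / sqrt_n) * (\<Sum>h\<in>I. (complex_of_real (\<sigma> h) * d h) * u h $ k))"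
proof -
  have "A *\<^sub>v \<phi> = vec m (\<lambda>k. \<Sum>h\<in>I. (complex_of_real (\<sigma> h) / sqrt_n) * (A *\<^sub>v u h) $ k)"
    by (subst phi_eq_sum_u) (rule mult_mat_vec_sum[OF A u_carrier])
  also have "\<dots> = vec m (\<lambda>k. (1 / sqrt_n) * (\<Sum>h\<in>I. (complex_of_real (\<sigma> h) * d h) * u h $ k))"
    by (rule eq_vecI) (auto simp: d u_carrier[THEN carrier_vecD] sum_distrib_left intro!: sum.cong)
  finally show ?thesis .
qed

lemma frame_op_invertible: "\<exists>Sinv \<in> carrier_mat m m. Sinv * S = 1\<^sub>m m \<and> S * Sinv = 1\<^sub>m m"
proof -
  let ?T = "u_diag_mat (\<lambda>h. 1 / complex_of_real ((\<sigma> h)\<^sup>2))"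
  have "?T * S = 1\<^sub>m m"
  proof (rule eq_mat_on_u)
    fix h assume h: "h \<in> I"
    have "?T * S *\<^sub>v u h = ?T *\<^sub>v (S *\<^sub>v u h)"
      using assoc_mult_mat_vec[OF u_diag_mat_carrier S_carrier u_carrier] .
    also have "\<dots> = u h"
      unfolding S_u[OF h] mult_mat_vec[OF u_diag_mat_carrier u_carrier] u_diag_mat_u[OF h]
      using sigma_pos[OF h] by (simp add: smult_smult_assoc)
    finally show "?T * S *\<^sub>v u h = 1\<^sub>m m *\<^sub>v u h" using u_carrier by simp
  qed (use u_diag_mat_carrier S_carrier in \<open>auto intro!: mult_carrier_mat\<close>)
  moreover then have "S * ?T = 1\<^sub>m m"
    using mat_mult_left_right_inverse[OF u_diag_mat_carrier S_carrier] by blast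
  ultimately show ?thesis using u_diag_mat_carrier by blast
qed

lemma left_inverse_u:
  assumes T: "T \<in> carrier_mat m m" "T * S = 1\<^sub>m m" and h: "h \<in> I"
  shows "T *\<^sub>v u h = (1 / complex_of_real ((\<sigma> h)\<^sup>2)) \<cdot>\<^sub>v u h"
proof -
  have "u h = T * S *\<^sub>v u h" using T u_carrier by simp
  also have "\<dots> = complex_of_real ((\<sigma> h)\<^sup>2) \<cdot>\<^sub>v (T *\<^sub>v u h)"
    unfolding assoc_mult_mat_vec[OF T(1) S_carrier u_carrier] S_u[OF h] mult_mat_vec[OF T(1) u_carrier] ..
  finally have "complex_of_real ((\<sigma> h)\<^sup>2) \<cdot>\<^sub>v (T *\<^sub>v u h) = u h" ..
  then show ?thesis
    by (rule smult_vec_cancel_left) (use sigma_pos[OF h] in simp)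
qed

lemma dual_frame_gu:
  assumes T: "T \<in> carrier_mat m m" "T * S = 1\<^sub>m m"
  shows "(\<forall>i < n. T *\<^sub>v fvec U \<phi> i = U i *\<^sub>v (T *\<^sub>v \<phi>))
    \<and> T *\<^sub>v \<phi> = vec m (\<lambda>r. (1 / sqrt_n) * (\<Sum>h \<in> I. (1 / complex_of_real (\<sigma> h)) * u h $ r))"
  using u_diagonal_commute_U[OF T(1) left_inverse_u[OF T]] u_diagonal_mult_phi[OF T(1) left_inverse_u[OF T]]
  by (simp add: sigma_nonzero power2_eq_square cong: sum.cong)

lemma canonical_tight_u:
  assumes R: "posdef_m m R" "R * R * S = 1\<^sub>m m" and h: "h \<in> I"
  shows "R *\<^sub>v u h = complex_of_real (1 / \<sigma> h) \<cdot>\<^sub>v u h"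
proof (rule posdef_eigenvector_of_square[OF R(1) u_carrier])
  have Rc: "R \<in> carrier_mat m m" using posdef_carrier[OF R(1)] .
  have "u h = R * R * S *\<^sub>v u h" using R(2) u_carrier by simp
  also have "\<dots> = R *\<^sub>v (R *\<^sub>v (S *\<^sub>v u h))"
    by (rule assoc_mult_mat_mat_vec[OF Rc Rc S_carrier u_carrier])
  also have "\<dots> = complex_of_real ((\<sigma> h)\<^sup>2) \<cdot>\<^sub>v (R *\<^sub>v (R *\<^sub>v u h))"
    using Rc u_carrier by (simp add: S_u[OF h] mult_mat_vec)
  finally have "complex_of_real ((\<sigma> h)\<^sup>2) \<cdot>\<^sub>v (R *\<^sub>v (R *\<^sub>v u h)) = u h" ..
  then show "R *\<^sub>v (R *\<^sub>v u h) = complex_of_real (1 / \<sigma> h * (1 / \<sigma> h)) \<cdot>\<^sub>v u h"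
    by (rule smult_vec_cancel_left) (use sigma_pos[OF h] in \<open>simp add: power2_eq_square\<close>)
qed (use sigma_pos[OF h] in simp)

lemma u_diag_mat_posdef:
  assumes d: "\<And>h. h \<in> I \<Longrightarrow> 0 < d h"
  shows "posdef_m m (u_diag_mat (\<lambda>h. complex_of_real (d h)))"
  unfolding posdef_m_def hermitian_m_def
proof (intro conjI ballI impI)
  let ?D = "u_diag_mat (\<lambda>h. complex_of_real (d h))"
  show "?D \<in> carrier_mat m m" by (rule u_diag_mat_carrier)
  show "adj ?D = ?D"
    by (rule eq_matI) (auto simp: adj_def u_diag_mat_def ac_simps)
  fix x :: "complex vec" assume x: "x \<in> carrier_vec m" "x \<noteq> 0\<^sub>v m"
  have "ip x (?D *\<^sub>v x) = (\<Sum>h\<in>I. (complex_of_real (d h) * ip (u h) x) * ip x (u h))"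
    unfolding u_diag_mat_mult_vec[OF x(1)] by (rule ip_sum_right[OF x(1)])
  also have "\<dots> = (\<Sum>h\<in>I. complex_of_real (d h * (cmod (ip (u h) x))\<^sup>2))"
  proof (intro sum.cong refl)
    fix h assume "h \<in> I"
    have "(complex_of_real (d h) * ip (u h) x) * ip x (u h) = complex_of_real (d h) * (ip (u h) x * cnj (ip (u h) x))"
      using ip_commute[OF u_carrier x(1)] by simp
    then show "(complex_of_real (d h) * ip (u h) x) * ip x (u h) = complex_of_real (d h * (cmod (ip (u h) x))\<^sup>2)"
      by (simp only: complex_norm_square[symmetric] of_real_mult)
  qed
  finally have "Re (ip x (?D *\<^sub>v x)) = (\<Sum>h\<in>I. d h * (cmod (ip (u h) x))\<^sup>2)"
    by simp
  moreover obtain h where h: "h \<in> I" "ip (u h) x \<noteq> 0"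
    using u_expansion_eq_0[OF x(1)] x(2) by blast
  then have "0 < (\<Sum>h\<in>I. d h * (cmod (ip (u h) x))\<^sup>2)"
    using d by (intro sum_pos2[OF finite_I h(1)]) (simp_all add: less_imp_le)
  ultimately show "0 < Re (ip x (?D *\<^sub>v x))" by simp
qed

lemma canonical_tight_exists: "\<exists>R. posdef_m m R \<and> R * R * S = 1\<^sub>m m"
proof (intro exI conjI)
  let ?R = "u_diag_mat (\<lambda>h. complex_of_real (1 / \<sigma> h))"
  show "posdef_m m ?R"
    using sigma_pos by (intro u_diag_mat_posdef) simp
  show "?R * ?R * S = 1\<^sub>m m"
  proof (rule eq_mat_on_u)
    fix h assume h: "h \<in> I"
    have R: "?R \<in> carrier_mat m m" by (rule u_diag_mat_carrier)
    have "?R * ?R * S *\<^sub>v u h = ?R *\<^sub>v (?R *\<^sub>v (S *\<^sub>v u h))"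
      by (rule assoc_mult_mat_mat_vec[OF R R S_carrier u_carrier])
    also have "\<dots> = u h"
      unfolding S_u[OF h] mult_mat_vec[OF R u_carrier] u_diag_mat_u[OF h] smult_smult_assoc
      using sigma_pos[OF h] by (simp add: power2_eq_square)
    finally show "?R * ?R * S *\<^sub>v u h = 1\<^sub>m m *\<^sub>v u h" using u_carrier by simp
  qed (use u_diag_mat_carrier S_carrier in \<open>auto intro!: mult_carrier_mat\<close>)
qed

lemma canonical_tight_gu:
  assumes R: "posdef_m m R" "R * R * S = 1\<^sub>m m"
  shows "(\<forall>i < n. R *\<^sub>v fvec U \<phi> i = U i *\<^sub>v (R *\<^sub>v \<phi>))
    \<and> R *\<^sub>v \<phi> = vec m (\<lambda>r. (1 / sqrt_n) * (\<Sum>h \<in> I. u h $ r))"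
  using u_diagonal_commute_U[OF posdef_carrier[OF R(1)] canonical_tight_u[OF R]]
    u_diagonal_mult_phi[OF posdef_carrier[OF R(1)] canonical_tight_u[OF R]]
  by (simp add: sigma_nonzero cong: sum.cong)

lemma S_hermitian: "adj S = S"
  by (rule eq_matI) (auto simp: adj_def frame_op_def ac_simps)

lemma eigenvalue_S_iff: "eigenvalue S e \<longleftrightarrow> (\<exists>h\<in>I. e = complex_of_real ((\<sigma> h)\<^sup>2))"
proof
  assume "eigenvalue S e"
  then obtain v where v: "v \<in> carrier_vec m" "v \<noteq> 0\<^sub>v m" "S *\<^sub>v v = e \<cdot>\<^sub>v v"
    unfolding eigenvalue_def eigenvector_def using S_carrier by auto
  obtain h where h: "h \<in> I" "ip (u h) v \<noteq> 0"
    using u_expansion_eq_0[OF v(1)] v(2) by blast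
  have "e * ip (u h) v = ip (u h) (S *\<^sub>v v)"
    unfolding v(3) ip_smult_right[OF u_carrier v(1)] ..
  also have "\<dots> = ip (adj S *\<^sub>v u h) v"
    by (rule ip_adj[OF S_carrier u_carrier v(1)])
  also have "\<dots> = complex_of_real ((\<sigma> h)\<^sup>2) * ip (u h) v"
    unfolding S_hermitian S_u[OF h(1)] ip_smult_left by simp
  finally show "\<exists>h\<in>I. e = complex_of_real ((\<sigma> h)\<^sup>2)"
    using h by auto
next
  assume "\<exists>h\<in>I. e = complex_of_real ((\<sigma> h)\<^sup>2)"
  then obtain h where h: "h \<in> I" "e = complex_of_real ((\<sigma> h)\<^sup>2)" by blast
  have "u h \<noteq> 0\<^sub>v m"
    using u_orthonormal[OF h(1) h(1)] by (auto simp: ip_def)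
  then show "eigenvalue S e"
    unfolding eigenvalue_def eigenvector_def using S_carrier u_carrier S_u[OF h(1)] h(2) by auto
qed

lemma Re_eigenvalues_S: "Re ` {e. eigenvalue S e} = (\<lambda>x. sqrt (real n) * x) ` ((\<lambda>h. Re (s_hat h)) ` I)"
proof -
  have "{e. eigenvalue S e} = (\<lambda>h. complex_of_real ((\<sigma> h)\<^sup>2)) ` I"
    unfolding eigenvalue_S_iff by auto
  then show ?thesis
    by (simp add: image_image sigma_square)
qed

lemma lam_min_S: "lam_min S = sqrt (real n) * Min ((\<lambda>h. Re (s_hat h)) ` I)"
  unfolding lam_min_def Re_eigenvalues_S
  using finite_I I_nonempty by (intro mono_Min_commute[symmetric] monoI mult_left_mono) auto

lemma lam_max_S: "lam_max S = sqrt (real n) * Max ((\<lambda>h. Re (s_hat h)) ` I)"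
  unfolding lam_max_def Re_eigenvalues_S
  using finite_I I_nonempty by (intro mono_Max_commute[symmetric] monoI mult_left_mono) auto

section \<open>Singular values of the synthesis matrix\<close>

abbreviation "\<Phi> \<equiv> Phi_mat m n U \<phi>"

definition fourier_mat :: "complex mat" where
  "fourier_mat = mat n n (\<lambda>(j, k). chi ns (\<psi> k) (\<psi> j) / sqrt_n)"

definition sigma_square_diag :: "complex mat" where
  "sigma_square_diag = mat n n (\<lambda>(j, k). if j = k then complex_of_real ((\<sigma> (\<psi> k))\<^sup>2) else 0)"

lemma Phi_carrier: "\<Phi> \<in> carrier_mat m n"
  unfolding Phi_mat_def by simp

lemma gram_carrier: "adj \<Phi> * \<Phi> \<in> carrier_mat n n"
  using adj_carrier[OF Phi_carrier] Phi_carrier by simp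

lemma fourier_mat_carrier: "fourier_mat \<in> carrier_mat n n"
  unfolding fourier_mat_def by simp

lemma sigma_square_diag_carrier: "sigma_square_diag \<in> carrier_mat n n"
  unfolding sigma_square_diag_def by simp

lemma index_gram:
  assumes "i < n" "j < n"
  shows "(adj \<Phi> * \<Phi>) $$ (i, j) = ip (phi_at (\<psi> i)) (phi_at (\<psi> j))"
  using assms phi_at_carrier[OF psi_in_Q[OF assms(1)], THEN carrier_vecD]
  by (simp add: adj_def Phi_mat_def scalar_prod_def ip_def fvec_eq_phi_at lessThan_atLeast0)

lemma gram_mult_fourier: "adj \<Phi> * \<Phi> * fourier_mat = fourier_mat * sigma_square_diag"
proof (rule eq_matI)
  fix i k assume "i < dim_row (fourier_mat * sigma_square_diag)" "k < dim_col (fourier_mat * sigma_square_diag)"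
  then have i: "i < n" and k: "k < n" unfolding fourier_mat_def sigma_square_diag_def by auto
  have "(adj \<Phi> * \<Phi> * fourier_mat) $$ (i, k) = (\<Sum>j<n. (chi ns (\<psi> k) (\<psi> j) / sqrt_n) * ip (phi_at (\<psi> i)) (phi_at (\<psi> j)))"
    unfolding index_mult_mat_sum[OF gram_carrier fourier_mat_carrier i k]
    using i k by (intro sum.cong refl) (simp add: index_gram fourier_mat_def)
  also have "\<dots> = (\<Sum>q\<in>Q. (chi ns (\<psi> k) q / sqrt_n) * ip (phi_at (\<psi> i)) (phi_at q))"
    by (rule sum.reindex_bij_betw[OF iso_bij])
  also have "\<dots> = ip (phi_at (\<psi> i)) (phi_hat (\<psi> k))"
    unfolding phi_hat_eq by (rule ip_sum_right[OF phi_at_carrier[OF psi_in_Q[OF i]], symmetric])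
  also have "\<dots> = (chi ns (\<psi> k) (\<psi> i) / sqrt_n) * complex_of_real ((\<sigma> (\<psi> k))\<^sup>2)"
    unfolding ip_phi_at_phi_hat[OF psi_in_Q[OF i]] sigma_square_complex using sqrt_n_nonzero by simp
  also have "\<dots> = (fourier_mat * sigma_square_diag) $$ (i, k)"
    unfolding index_mult_mat_sum[OF fourier_mat_carrier sigma_square_diag_carrier i k]
    using i k by (simp add: fourier_mat_def sigma_square_diag_def if_distrib[of "(*) _"] cong: if_cong)
  finally show "(adj \<Phi> * \<Phi> * fourier_mat) $$ (i, k) = (fourier_mat * sigma_square_diag) $$ (i, k)" .
qed (use gram_carrier fourier_mat_carrier sigma_square_diag_carrier in auto)

lemma fourier_mat_unitary: "adj fourier_mat * fourier_mat = 1\<^sub>m n"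
proof (rule eq_matI)
  fix i k assume "i < dim_row (1\<^sub>m n)" "k < dim_col (1\<^sub>m n)"
  then have i: "i < n" and k: "k < n" by auto
  have "(adj fourier_mat * fourier_mat) $$ (i, k) = (\<Sum>j<n. chi ns (\<psi> k) (\<psi> j) * cnj (chi ns (\<psi> i) (\<psi> j)) / (sqrt_n * sqrt_n))"
    unfolding index_mult_mat_sum[OF adj_carrier[OF fourier_mat_carrier] fourier_mat_carrier i k]
    using i k by (intro sum.cong refl) (simp add: fourier_mat_def adj_def)
  also have "\<dots> = (\<Sum>q\<in>Q. chi ns (\<psi> k) q * cnj (chi ns (\<psi> i) q)) / (sqrt_n * sqrt_n)"
    unfolding sum_divide_distrib by (rule sum.reindex_bij_betw[OF iso_bij])
  also have "\<dots> = (if \<psi> k = \<psi> i then 1 else 0)"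
    unfolding chi_orthogonal[OF ns_pos psi_in_Q[OF k] psi_in_Q[OF i]] sqrt_n_square card_Q using n_pos by simp
  also have "\<dots> = 1\<^sub>m n $$ (i, k)"
    using iso_bij i k unfolding bij_betw_def inj_on_def by auto
  finally show "(adj fourier_mat * fourier_mat) $$ (i, k) = 1\<^sub>m n $$ (i, k)" .
qed (use adj_carrier[OF fourier_mat_carrier] fourier_mat_carrier in auto)

lemma char_poly_gram: "char_poly (adj \<Phi> * \<Phi>) = char_poly sigma_square_diag"
proof (rule char_poly_similar)
  have F': "adj fourier_mat \<in> carrier_mat n n" using adj_carrier[OF fourier_mat_carrier] .
  have FF': "fourier_mat * adj fourier_mat = 1\<^sub>m n"
    using mat_mult_left_right_inverse[OF F' fourier_mat_carrier fourier_mat_unitary] .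
  have "adj \<Phi> * \<Phi> = adj \<Phi> * \<Phi> * (fourier_mat * adj fourier_mat)"
    using right_mult_one_mat[OF gram_carrier] FF' by simp
  also have "\<dots> = (adj \<Phi> * \<Phi> * fourier_mat) * adj fourier_mat"
    using gram_carrier fourier_mat_carrier F' by (simp add: assoc_mult_mat)
  also have "\<dots> = fourier_mat * sigma_square_diag * adj fourier_mat"
    unfolding gram_mult_fourier ..
  finally show "similar_mat (adj \<Phi> * \<Phi>) sigma_square_diag"
    unfolding similar_mat_def
    using similar_mat_witI[OF FF' fourier_mat_unitary _ gram_carrier sigma_square_diag_carrier fourier_mat_carrier F']
    by blast
qed

lemma singular_values_Phi: "is_singular_values \<Phi> (image_mset \<sigma> (mset_set Q))"
  unfolding is_singular_values_def
proof
  show "\<forall>x\<in>#image_mset \<sigma> (mset_set Q). 0 \<le> x" using sigma_nonneg by auto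
  have "char_poly (adj \<Phi> * \<Phi>) = (\<Prod>a\<leftarrow>diag_mat sigma_square_diag. [:- a, 1:])"
    unfolding char_poly_gram
    by (rule char_poly_upper_triangular[OF sigma_square_diag_carrier])
      (auto simp: upper_triangular_def sigma_square_diag_def)
  also have "\<dots> = (\<Prod>i\<in>{..<n}. [:- complex_of_real ((\<sigma> (\<psi> i))\<^sup>2), 1:])"
    unfolding diag_mat_def sigma_square_diag_def lessThan_atLeast0
    by (simp add: prod.distinct_set_conv_list[symmetric] o_def)
  also have "\<dots> = (\<Prod>q\<in>Q. [:- complex_of_real ((\<sigma> q)\<^sup>2), 1:])"
    by (rule prod.reindex_bij_betw[OF iso_bij])
  also have "\<dots> = (\<Prod>x\<in>#image_mset \<sigma> (mset_set Q). [:- complex_of_real (x\<^sup>2), 1:])"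
    unfolding prod_unfold_prod_mset by (simp add: image_mset.compositionality o_def)
  finally show "char_poly (adj \<Phi> * \<Phi>) = (\<Prod>x\<in>#image_mset \<sigma> (mset_set Q). [:- complex_of_real (x\<^sup>2), 1:])" .
qed

end

theorem theorem2:
  fixes m n :: nat and ns :: "nat list"
    and U :: "nat \<Rightarrow> complex mat" and \<phi> :: "complex vec"
    and \<psi> :: "nat \<Rightarrow> (nat \<Rightarrow> nat)"
  assumes m_pos: "0 < m"
    and ns_pos: "\<forall>t < length ns. 0 < ns ! t"
    and phi_dim: "\<phi> \<in> carrier_vec m"
    and unitary: "\<forall>i < n. unitary_m m (U i)"
    and distinct: "inj_on U {..<n}"
    and closed: "\<forall>i < n. \<forall>j < n. \<exists>k < n. U i * U j = U k"
    and abelian: "\<forall>i < n. \<forall>j < n. U i * U j = U j * U i"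
    and iso_bij: "bij_betw \<psi> {..<n} (Qset ns)"
    and iso_hom: "\<forall>i < n. \<forall>j < n. \<forall>k < n. U i * U j = U k \<longrightarrow> \<psi> k = qadd ns (\<psi> i) (\<psi> j)"
    and spanning: "\<forall>v \<in> carrier_vec m. \<exists>c \<in> carrier_vec n. v = Phi_mat m n U \<phi> *\<^sub>v c"
  shows
    "(\<forall>h \<in> Qset ns. Im (shat ns n U \<psi> \<phi> h) = 0 \<and> 0 \<le> Re (shat ns n U \<psi> \<phi> h))
     \<and> is_singular_values (Phi_mat m n U \<phi>) (image_mset (sigma ns n U \<psi> \<phi>) (mset_set (Qset ns)))
     \<and> (\<exists>Sinv \<in> carrier_mat m m. Sinv * frame_op m n U \<phi> = 1\<^sub>m m \<and> frame_op m n U \<phi> * Sinv = 1\<^sub>m m)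
     \<and> (\<forall>Sinv \<in> carrier_mat m m. Sinv * frame_op m n U \<phi> = 1\<^sub>m m \<longrightarrow>
          (\<forall>i < n. Sinv *\<^sub>v fvec U \<phi> i = U i *\<^sub>v (Sinv *\<^sub>v \<phi>))
          \<and> Sinv *\<^sub>v \<phi> = vec m (\<lambda>r. (1 / complex_of_real (sqrt (real n))) *
               (\<Sum>h \<in> Iset ns n U \<psi> \<phi>. (1 / complex_of_real (sigma ns n U \<psi> \<phi> h)) * uvec ns m n U \<psi> \<phi> h $ r)))
     \<and> (\<exists>R. posdef_m m R \<and> R * R * frame_op m n U \<phi> = 1\<^sub>m m)
     \<and> (\<forall>R. posdef_m m R \<and> R * R * frame_op m n U \<phi> = 1\<^sub>m m \<longrightarrow>
          (\<forall>i < n. R *\<^sub>v fvec U \<phi> i = U i *\<^sub>v (R *\<^sub>v \<phi>))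
          \<and> R *\<^sub>v \<phi> = vec m (\<lambda>r. (1 / complex_of_real (sqrt (real n))) *
               (\<Sum>h \<in> Iset ns n U \<psi> \<phi>. uvec ns m n U \<psi> \<phi> h $ r)))
     \<and> lam_min (frame_op m n U \<phi>) = sqrt (real n) * Min ((\<lambda>h. Re (shat ns n U \<psi> \<phi> h)) ` Iset ns n U \<psi> \<phi>)
     \<and> lam_max (frame_op m n U \<phi>) = sqrt (real n) * Max ((\<lambda>h. Re (shat ns n U \<psi> \<phi> h)) ` Iset ns n U \<psi> \<phi>)"
proof -
  interpret gu_frame m n ns U \<phi> \<psi>
    using m_pos ns_pos phi_dim unitary closed iso_bij iso_hom spanning by unfold_locales
  have "\<forall>h \<in> Q. Im (s_hat h) = 0 \<and> 0 \<le> Re (s_hat h)"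
    using s_hat_real_nonneg by (metis Im_complex_of_real)
  then show ?thesis
    using singular_values_Phi frame_op_invertible dual_frame_gu canonical_tight_exists
      canonical_tight_gu lam_min_S lam_max_S
    by blast
qed

end
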